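(* Let $\gamma=(a,b,c,d,e,f)$ be a coloring of the tetrahedron, and let $E(u)=u\prod_{i=1}^3(S_i-u)+\prod_{j=1}^4(u-T_j)$. Then $E(u)=Au^2+Bu+C'$ is a polynomial of degree at most $2$ in $u$, with $A=\frac12(ad+bc+ef)$ and $B=-\frac14\big(bc(b+c)+ad(a+d)+ef(e+f)+abc+abd+acd+bcd+abe+bce+ade+cde+acf+bcf+adf+bdf+aef+bef+cef+def\big)$, and its discriminant $D=B^2-4AC'$ satisfies $$D=-\tfrac14\det(C).$$ Consequently the number field generated by the roots of $E$ is $\mathbb Q(\sqrt{-\det C})$.
   Context: $S_1=\frac12(a+b+c+d)$, $S_2=\frac12(a+d+e+f)$, $S_3=\frac12(b+c+e+f)$, $T_1=\frac12(a+b+e)$, $T_2=\frac12(a+c+f)$, $T_3=\frac12(c+d+e)$, $T_4=\frac12(b+d+f)$. The (modified) Cayley–Menger matrix $C=(C_{ij})_{0\le i,j\le4}$ has $C_{00}=0$, $C_{0j}=-1$, $C_{j0}=1$ for $j\ge1$, and $C_{ij}=1-d_{ij}^2/2$ for $i,j\ge1$, where $d_{ii}=0$, $d_{ij}=d_{ji}$ and $d_{12}=a,\ d_{23}=b,\ d_{14}=c,\ d_{34}=d,\ d_{13}=e,\ d_{24}=f$. *)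

theory Defs
  imports "HOL-Analysis.Analysis"
begin

text \<open>Admissible colorings of the tetrahedron: colours are non-negative integers
  and each of the four faces (a,b,e), (a,c,f), (c,d,e), (b,d,f) -- the triples
  appearing in T1..T4 -- satisfies the triangle inequalities and has even sum.\<close>

definition admissible_triple :: "nat \<Rightarrow> nat \<Rightarrow> nat \<Rightarrow> bool" where
  "admissible_triple x y z \<longleftrightarrow> x \<le> y + z \<and> y \<le> x + z \<and> z \<le> x + y \<and> even (x + y + z)"

definition tet_coloring :: "nat \<Rightarrow> nat \<Rightarrow> nat \<Rightarrow> nat \<Rightarrow> nat \<Rightarrow> nat \<Rightarrow> bool" where
  "tet_coloring a b c d e f \<longleftrightarrow>
     admissible_triple a b e \<and> admissible_triple a c f \<and>
     admissible_triple c d e \<and> admissible_triple b d f"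

definition S1 :: "real \<Rightarrow> real \<Rightarrow> real \<Rightarrow> real \<Rightarrow> real \<Rightarrow> real \<Rightarrow> real" where
  "S1 a b c d e f = (a + b + c + d) / 2"
definition S2 :: "real \<Rightarrow> real \<Rightarrow> real \<Rightarrow> real \<Rightarrow> real \<Rightarrow> real \<Rightarrow> real" where
  "S2 a b c d e f = (a + d + e + f) / 2"
definition S3 :: "real \<Rightarrow> real \<Rightarrow> real \<Rightarrow> real \<Rightarrow> real \<Rightarrow> real \<Rightarrow> real" where
  "S3 a b c d e f = (b + c + e + f) / 2"
definition T1 :: "real \<Rightarrow> real \<Rightarrow> real \<Rightarrow> real \<Rightarrow> real \<Rightarrow> real \<Rightarrow> real" where
  "T1 a b c d e f = (a + b + e) / 2"
definition T2 :: "real \<Rightarrow> real \<Rightarrow> real \<Rightarrow> real \<Rightarrow> real \<Rightarrow> real \<Rightarrow> real" where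
  "T2 a b c d e f = (a + c + f) / 2"
definition T3 :: "real \<Rightarrow> real \<Rightarrow> real \<Rightarrow> real \<Rightarrow> real \<Rightarrow> real \<Rightarrow> real" where
  "T3 a b c d e f = (c + d + e) / 2"
definition T4 :: "real \<Rightarrow> real \<Rightarrow> real \<Rightarrow> real \<Rightarrow> real \<Rightarrow> real \<Rightarrow> real" where
  "T4 a b c d e f = (b + d + f) / 2"

definition Efun :: "real \<Rightarrow> real \<Rightarrow> real \<Rightarrow> real \<Rightarrow> real \<Rightarrow> real \<Rightarrow> complex \<Rightarrow> complex" where
  "Efun a b c d e f u =
     u * (of_real (S1 a b c d e f) - u) * (of_real (S2 a b c d e f) - u) * (of_real (S3 a b c d e f) - u)
     + (u - of_real (T1 a b c d e f)) * (u - of_real (T2 a b c d e f))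
       * (u - of_real (T3 a b c d e f)) * (u - of_real (T4 a b c d e f))"

definition dist_tet :: "real \<Rightarrow> real \<Rightarrow> real \<Rightarrow> real \<Rightarrow> real \<Rightarrow> real \<Rightarrow> nat \<Rightarrow> nat \<Rightarrow> real" where
  "dist_tet a b c d e f i j =
     (if {i, j} = {1, 2} then a
      else if {i, j} = {2, 3} then b
      else if {i, j} = {1, 4} then c
      else if {i, j} = {3, 4} then d
      else if {i, j} = {1, 3} then e
      else if {i, j} = {2, 4} then f
      else 0)"

definition CM :: "real \<Rightarrow> real \<Rightarrow> real \<Rightarrow> real \<Rightarrow> real \<Rightarrow> real \<Rightarrow> nat \<Rightarrow> nat \<Rightarrow> real" where
  "CM a b c d e f i j =
     (if i = 0 \<and> j = 0 then 0
      else if i = 0 then -1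
      else if j = 0 then 1
      else 1 - (dist_tet a b c d e f i j)\<^sup>2 / 2)"

definition det5 :: "(nat \<Rightarrow> nat \<Rightarrow> real) \<Rightarrow> real" where
  "det5 M = (\<Sum>p | p permutes {..<5}. of_int (sign p) * (\<Prod>i<5. M i (p i)))"

definition is_subfield_C :: "complex set \<Rightarrow> bool" where
  "is_subfield_C K \<longleftrightarrow> 0 \<in> K \<and> 1 \<in> K \<and> (\<forall>x\<in>K. \<forall>y\<in>K. x + y \<in> K \<and> x * y \<in> K) \<and>
     (\<forall>x\<in>K. - x \<in> K) \<and> (\<forall>x\<in>K. x \<noteq> 0 \<longrightarrow> inverse x \<in> K)"

definition gen_field :: "complex set \<Rightarrow> complex set" where
  "gen_field S = \<Inter> {K. is_subfield_C K \<and> S \<subseteq> K}"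

end

theory Submission
  imports Defs
begin

(* E(u) = u (S1-u)(S2-u)(S3-u) + (u-T1)(u-T2)(u-T3)(u-T4) has its quartic and cubic terms
   cancel, so E(u) = A u^2 + B u + C' with C' = T1 T2 T3 T4.  The proof has two independent
   halves.

   Algebra: the coefficients A, B, C' are named as functions of arbitrary real edge lengths;
   expanding the 5x5 Cayley-Menger determinant by the Leibniz formula (evaluating the 120
   permutations by simplification) and normalising polynomials shows det C = -4 (B^2 - 4AC').

   Field theory: for a quadratic A u^2 + B u + C with A, B rational and A nonzero, the
   subfield of the complex numbers generated by its roots equals the one generated by any
   square root s of its discriminant, since the roots are (-B +- s)/(2A) and conversely
   s = 2A r + B for a root r.  Every subfield contains the rationals, which is what makes
   these expressions stay inside the fields in question.  Rescaling the generator by a nonzero rational does not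
   change the generated field, which turns sqrt(D) into sqrt(-det C) = 2 sqrt(D).

   The theorem follows by combining both halves. *)

lemma subfield_gen_field: "is_subfield_C (gen_field S)"
  unfolding gen_field_def is_subfield_C_def by blast

lemma gen_field_superset: "S \<subseteq> gen_field S"
  unfolding gen_field_def by blast

lemma gen_field_least: "is_subfield_C K \<Longrightarrow> S \<subseteq> K \<Longrightarrow> gen_field S \<subseteq> K"
  unfolding gen_field_def by blast

lemma subfield_add: "is_subfield_C K \<Longrightarrow> x \<in> K \<Longrightarrow> y \<in> K \<Longrightarrow> x + y \<in> K"
  and subfield_mult: "is_subfield_C K \<Longrightarrow> x \<in> K \<Longrightarrow> y \<in> K \<Longrightarrow> x * y \<in> K"
  and subfield_uminus: "is_subfield_C K \<Longrightarrow> x \<in> K \<Longrightarrow> - x \<in> K"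
  by (auto simp: is_subfield_C_def)

lemma subfield_diff: "is_subfield_C K \<Longrightarrow> x \<in> K \<Longrightarrow> y \<in> K \<Longrightarrow> x - y \<in> K"
  using subfield_add[of K x "- y"] subfield_uminus[of K y] by simp

lemma subfield_divide: "is_subfield_C K \<Longrightarrow> x \<in> K \<Longrightarrow> y \<in> K \<Longrightarrow> x / y \<in> K"
  unfolding divide_inverse by (cases "y = 0") (auto simp: is_subfield_C_def)

lemma subfield_of_nat: "is_subfield_C K \<Longrightarrow> of_nat n \<in> K"
  by (induction n) (auto simp: is_subfield_C_def)

lemma subfield_of_int: "is_subfield_C K \<Longrightarrow> of_int n \<in> K"
  by (cases n rule: int_cases2) (auto simp: subfield_of_nat subfield_uminus)

lemma subfield_Rats:
  assumes "is_subfield_C K" and "x \<in> \<rat>"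
  shows "x \<in> K"
proof -
  from \<open>x \<in> \<rat>\<close> obtain m n where "x = of_int m / of_int n"
    by (rule Rats_cases') blast
  then show ?thesis
    using assms(1) by (simp add: subfield_divide subfield_of_int)
qed

lemma gen_field_rescale:
  assumes "q \<in> \<rat>" and "q \<noteq> 0"
  shows "gen_field {q * x} = gen_field {x}"
proof
  have K: "is_subfield_C (gen_field {x})" by (rule subfield_gen_field)
  have "q * x \<in> gen_field {x}"
    using subfield_Rats[OF K \<open>q \<in> \<rat>\<close>] gen_field_superset[of "{x}"]
    by (intro subfield_mult[OF K]) auto
  then show "gen_field {q * x} \<subseteq> gen_field {x}"
    by (simp add: gen_field_least[OF K])
next
  have K: "is_subfield_C (gen_field {q * x})" by (rule subfield_gen_field)
  have "(q * x) / q \<in> gen_field {q * x}"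
    using subfield_Rats[OF K \<open>q \<in> \<rat>\<close>] gen_field_superset[of "{q * x}"]
    by (intro subfield_divide[OF K]) auto
  then show "gen_field {x} \<subseteq> gen_field {q * x}"
    using \<open>q \<noteq> 0\<close> by (simp add: gen_field_least[OF K])
qed

lemma quadratic_roots:
  fixes A B C s u :: "'a :: field_char_0"
  assumes "A \<noteq> 0" and s: "s\<^sup>2 = B\<^sup>2 - 4 * A * C"
  shows "A * u\<^sup>2 + B * u + C = 0 \<longleftrightarrow> u = (- B + s) / (2 * A) \<or> u = (- B - s) / (2 * A)"
proof -
  have "4 * A * (A * u\<^sup>2 + B * u + C) = (2 * A * u + B - s) * (2 * A * u + B + s)"
    using s by (simp add: algebra_simps power2_eq_square)
  then have "A * u\<^sup>2 + B * u + C = 0 \<longleftrightarrow> 2 * A * u + B - s = 0 \<or> 2 * A * u + B + s = 0"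
    using \<open>A \<noteq> 0\<close> by (metis mult_eq_0_iff zero_neq_numeral)
  moreover have "2 * A * u + B - s = 0 \<longleftrightarrow> u = (- B + s) / (2 * A)"
    using \<open>A \<noteq> 0\<close> by (simp add: eq_divide_eq algebra_simps)
  moreover have "2 * A * u + B + s = 0 \<longleftrightarrow> u = (- B - s) / (2 * A)"
    using \<open>A \<noteq> 0\<close> by (simp add: eq_divide_eq algebra_simps)
      (metis add.commute add_eq_0_iff2 eq_diff_eq)
  ultimately show ?thesis by blast
qed

lemma gen_field_quadratic_roots:
  fixes A B C s :: complex
  assumes rat: "A \<in> \<rat>" "B \<in> \<rat>" and "A \<noteq> 0"
    and s: "s\<^sup>2 = B\<^sup>2 - 4 * A * C"
  shows "gen_field {u. A * u\<^sup>2 + B * u + C = 0} = gen_field {s}"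
proof
  let ?K = "gen_field {s}"
  have K: "is_subfield_C ?K" by (rule subfield_gen_field)
  have in_K: "A \<in> ?K" "B \<in> ?K" "2 \<in> ?K" "s \<in> ?K"
    using subfield_Rats[OF K rat(1)] subfield_Rats[OF K rat(2)] subfield_of_nat[OF K, of 2]
      gen_field_superset[of "{s}"] by simp_all
  have root1: "(- B + s) / (2 * A) \<in> ?K"
    using in_K by (intro subfield_divide[OF K] subfield_add[OF K] subfield_uminus[OF K]
        subfield_mult[OF K])
  have root2: "(- B - s) / (2 * A) \<in> ?K"
    using in_K by (intro subfield_divide[OF K] subfield_diff[OF K] subfield_uminus[OF K]
        subfield_mult[OF K])
  have "{u. A * u\<^sup>2 + B * u + C = 0} \<subseteq> ?K"
  proof
    fix u assume "u \<in> {u. A * u\<^sup>2 + B * u + C = 0}"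
    then have "A * u\<^sup>2 + B * u + C = 0" by simp
    then have "u = (- B + s) / (2 * A) \<or> u = (- B - s) / (2 * A)"
      by (rule quadratic_roots[OF \<open>A \<noteq> 0\<close> s, THEN iffD1])
    then show "u \<in> ?K"
      using root1 root2 by (elim disjE) simp_all
  qed
  then show "gen_field {u. A * u\<^sup>2 + B * u + C = 0} \<subseteq> ?K"
    by (rule gen_field_least[OF K])
next
  let ?K = "gen_field {u. A * u\<^sup>2 + B * u + C = 0}"
  have K: "is_subfield_C ?K" by (rule subfield_gen_field)
  define r where "r = (- B + s) / (2 * A)"
  have "A * r\<^sup>2 + B * r + C = 0"
    by (rule quadratic_roots[OF \<open>A \<noteq> 0\<close> s, THEN iffD2]) (simp add: r_def)
  then have "r \<in> ?K"
    using gen_field_superset[of "{u. A * u\<^sup>2 + B * u + C = 0}"] by blast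
  moreover have "A \<in> ?K" "B \<in> ?K" "2 \<in> ?K"
    using subfield_Rats[OF K rat(1)] subfield_Rats[OF K rat(2)] subfield_of_nat[OF K, of 2]
    by simp_all
  ultimately have "2 * A * r + B \<in> ?K"
    by (intro subfield_add[OF K] subfield_mult[OF K])
  moreover have "s = 2 * A * r + B"
    using \<open>A \<noteq> 0\<close> unfolding r_def by simp
  ultimately show "gen_field {s} \<subseteq> ?K"
    by (simp add: gen_field_least[OF K])
qed

definition E_A :: "real \<Rightarrow> real \<Rightarrow> real \<Rightarrow> real \<Rightarrow> real \<Rightarrow> real \<Rightarrow> real" where
  "E_A a b c d e f = (a * d + b * c + e * f) / 2"

definition E_B :: "real \<Rightarrow> real \<Rightarrow> real \<Rightarrow> real \<Rightarrow> real \<Rightarrow> real \<Rightarrow> real" where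
  "E_B a b c d e f = - (b * c * (b + c) + a * d * (a + d) + e * f * (e + f)
      + a * b * c + a * b * d + a * c * d + b * c * d + a * b * e + b * c * e
      + a * d * e + c * d * e + a * c * f + b * c * f + a * d * f + b * d * f
      + a * e * f + b * e * f + c * e * f + d * e * f) / 4"

definition E_C :: "real \<Rightarrow> real \<Rightarrow> real \<Rightarrow> real \<Rightarrow> real \<Rightarrow> real \<Rightarrow> real" where
  "E_C a b c d e f = T1 a b c d e f * T2 a b c d e f * T3 a b c d e f * T4 a b c d e f"

text \<open>The quartic and cubic terms of \<open>E\<close> cancel.\<close>

lemma Efun_quadratic:
  "Efun a b c d e f u =
     of_real (E_A a b c d e f) * u\<^sup>2 + of_real (E_B a b c d e f) * u + of_real (E_C a b c d e f)"
  unfolding Efun_def E_A_def E_B_def E_C_def S1_def S2_def S3_def T1_def T2_def T3_def T4_def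
  by (simp add: field_simps power2_eq_square)

lemma E_coefficients_Rats:
  assumes "a \<in> \<rat>" "b \<in> \<rat>" "c \<in> \<rat>" "d \<in> \<rat>" "e \<in> \<rat>" "f \<in> \<rat>"
  shows "E_A a b c d e f \<in> \<rat>" "E_B a b c d e f \<in> \<rat>"
  using assms by (simp_all add: E_A_def E_B_def)

lemma det_CM_discriminant:
  "det5 (CM a b c d e f) = - 4 * ((E_B a b c d e f)\<^sup>2 - 4 * E_A a b c d e f * E_C a b c d e f)"
proof -
  have U: "{..<5::nat} = {0, 1, 2, 3, 4}" by auto
  show ?thesis
    unfolding det5_def U
    apply (simp add: sum_over_permutations_insert permutes_sing sign_swap_id permutation_swap_id
        sign_compose permutation_compose transpose_def CM_def dist_tet_def doubleton_eq_iff)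
    apply (simp add: E_A_def E_B_def E_C_def T1_def T2_def T3_def T4_def divide_simps)
    apply algebra
    done
qed

theorem lemma9p3:
  fixes a b c d e f :: nat
  assumes "tet_coloring a b c d e f"
  defines "A \<equiv> (real a * real d + real b * real c + real e * real f) / 2"
      and "B \<equiv> - (real b * real c * (real b + real c) + real a * real d * (real a + real d)
               + real e * real f * (real e + real f)
               + real a * real b * real c + real a * real b * real d + real a * real c * real d
               + real b * real c * real d + real a * real b * real e + real b * real c * real e
               + real a * real d * real e + real c * real d * real e + real a * real c * real f
               + real b * real c * real f + real a * real d * real f + real b * real d * real f
               + real a * real e * real f + real b * real e * real f + real c * real e * real f
               + real d * real e * real f) / 4"
      and "detC \<equiv> det5 (CM (real a) (real b) (real c) (real d) (real e) (real f))"
  shows "\<exists>C'::real.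
           (\<forall>u::complex. Efun (real a) (real b) (real c) (real d) (real e) (real f) u
                 = of_real A * u\<^sup>2 + of_real B * u + of_real C')
         \<and> B\<^sup>2 - 4 * A * C' = - detC / 4
         \<and> (A \<noteq> 0 \<longrightarrow>
              gen_field {u. Efun (real a) (real b) (real c) (real d) (real e) (real f) u = 0}
              = gen_field {csqrt (of_real (- detC))})"
proof -
  let ?E = "Efun (real a) (real b) (real c) (real d) (real e) (real f)"
  define C' where "C' = E_C (real a) (real b) (real c) (real d) (real e) (real f)"
  show ?thesis
  proof (intro exI[of _ C'] conjI allI impI)
    have coeffs: "A = E_A (real a) (real b) (real c) (real d) (real e) (real f)"
      "B = E_B (real a) (real b) (real c) (real d) (real e) (real f)"
      unfolding A_def B_def E_A_def E_B_def by simp_all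
    show E: "?E u = of_real A * u\<^sup>2 + of_real B * u + of_real C'" for u
      unfolding coeffs C'_def by (rule Efun_quadratic)
    show disc: "B\<^sup>2 - 4 * A * C' = - detC / 4"
      unfolding coeffs C'_def detC_def det_CM_discriminant by simp
    assume "A \<noteq> 0"
    have rat: "A \<in> \<rat>" "B \<in> \<rat>"
      unfolding coeffs by (simp_all add: E_coefficients_Rats)
    define s where "s = csqrt (of_real (- detC)) / 2"
    have "s\<^sup>2 = of_real (- detC) / 4"
      unfolding s_def by (simp add: power_divide)
    also have "\<dots> = of_real (B\<^sup>2 - 4 * A * C')"
      by (simp add: disc)
    also have "\<dots> = (of_real B)\<^sup>2 - 4 * of_real A * of_real C'"
      by simp
    finally have "gen_field {u. ?E u = 0} = gen_field {s}"
      using gen_field_quadratic_roots[where C = "of_real C'"] rat \<open>A \<noteq> 0\<close>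
      by (simp add: E)
    also have "\<dots> = gen_field {2 * s}"
      by (simp add: gen_field_rescale)
    finally show "gen_field {u. ?E u = 0} = gen_field {csqrt (of_real (- detC))}"
      by (simp add: s_def)
  qed
qed

end
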